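(* For complex numbers $x,y$ with $y\ne 0$, the double series \[ A(x,y)=\sum_{n=0}^{\infty} x^n\binom{2n}{n}\sum_{k=0}^n\binom{n}{k}^2\binom{2k}{n}(-1)^k y^{2k-n} \] converges absolutely provided \[ \left|16xy\left(\sqrt{\left|\frac{4x}{y}\right|}+\sqrt{1+\left|\frac{4x}{y}\right|}\right)^2\right|<1. \]
   Context: $\binom{2k}{n}=0$ for $n>2k$; absolute convergence means convergence of the double series of absolute values of all terms. *)

theory Defs
  imports "HOL-Analysis.Analysis"
begin

text \<open>The (n,k)-th term of the double series A(x,y). The exponent 2k-n may be
negative; it is an integer power (powi). When 2k < n the binomial (2k choose n)
vanishes, so the term is 0.\<close>
definition A_term :: "complex \<Rightarrow> complex \<Rightarrow> nat \<Rightarrow> nat \<Rightarrow> complex" where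
  "A_term x y n k = x ^ n * of_nat (2*n choose n) * of_nat ((n choose k)^2)
     * of_nat (2*k choose n) * (-1) ^ k * y powi (2 * int k - int n)"

end

theory Submission
  imports Defs
begin

text \<open>Vandermonde gives \<open>(n choose k)\<^sup>2 \<le> (2n choose 2k)\<close>, and the subset-of-a-subset identity
  turns \<open>(2n choose 2k) (2k choose n)\<close> into \<open>(2n choose n) (n choose 2k-n)\<close>. Together with
  \<open>(2n choose n) \<le> 4\<^sup>n\<close> this bounds the \<open>(n,k)\<close>-th term by \<open>(16|x|)\<^sup>n (n choose 2k-n) |y|\<^sup>2\<^sup>k\<^sup>-\<^sup>n\<close>,
  so the \<open>n\<close>-th row sum is at most \<open>(16|x|(1+|y|))\<^sup>n\<close>. With \<open>u = \<surd>(4|x|)\<close>, \<open>v = \<surd>(4|x|+|y|)\<close>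
  the hypothesis reads \<open>w\<^sup>2 < 1\<close> for \<open>w = 2u(u+v)\<close>, while \<open>16|x|(1+|y|) = w\<^sup>2 + 4u\<^sup>2(1-w)\<close>
  and \<open>4u\<^sup>2 \<le> 2w\<close>; hence the rows are dominated by a convergent geometric series.\<close>

lemma choose_square_mult_choose_le:
  fixes n k :: nat
  assumes "k \<le> n" "n \<le> 2*k"
  shows "(n choose k)^2 * (2*k choose n) \<le> (2*n choose n) * (n choose (2*k - n))"
proof -
  have "(n choose k) * (n choose (2*k - k)) \<le> (\<Sum>i\<le>2*k. (n choose i) * (n choose (2*k - i)))"
    by (rule member_le_sum) auto
  also have "\<dots> = 2*n choose 2*k"
    by (simp add: vandermonde mult_2)
  finally have "(n choose k)^2 \<le> 2*n choose 2*k"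
    by (simp add: power2_eq_square)
  then have "(n choose k)^2 * (2*k choose n) \<le> (2*n choose 2*k) * (2*k choose n)"
    by (rule mult_le_mono1)
  also have "\<dots> = (2*n choose n) * (n choose (2*k - n))"
    using choose_mult[of n "2*k" "2*n"] assms by simp
  finally show ?thesis .
qed

lemma central_binomial_le_four_power: "2*n choose n \<le> 4^n"
proof -
  have "2*n choose n \<le> 2^(2*n)"
    by (rule binomial_le_pow2)
  then show ?thesis
    by (simp add: power_mult)
qed

lemma norm_A_term_le:
  "norm (A_term x y n k)
     \<le> (16 * norm x)^n * (if n \<le> 2*k then (n choose (2*k - n)) * norm y ^ (2*k - n) else 0)"
proof (cases "k \<le> n \<and> n \<le> 2*k")
  case False
  then have "A_term x y n k = 0"
    by (auto simp: A_term_def not_le)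
  then show ?thesis
    by simp
next
  case True
  then have exponent: "2 * int k - int n = int (2*k - n)"
    by simp
  have "norm (A_term x y n k)
      = norm x ^ n * real ((2*n choose n) * ((n choose k)^2 * (2*k choose n))) * norm y ^ (2*k - n)"
    unfolding A_term_def exponent by (simp add: norm_mult norm_power norm_power_int)
  also have "\<dots> \<le> norm x ^ n * real (4^n * (4^n * (n choose (2*k - n)))) * norm y ^ (2*k - n)"
  proof -
    have "(n choose k)^2 * (2*k choose n) \<le> 4^n * (n choose (2*k - n))"
      using choose_square_mult_choose_le[of k n] True
        mult_le_mono1[OF central_binomial_le_four_power[of n]] by (meson order_trans)
    then have "(2*n choose n) * ((n choose k)^2 * (2*k choose n)) \<le> 4^n * (4^n * (n choose (2*k - n)))"
      by (rule mult_le_mono[OF central_binomial_le_four_power])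
    then show ?thesis
      by (intro mult_right_mono mult_left_mono of_nat_mono) auto
  qed
  also have "\<dots> = (16 * norm x)^n * (n choose (2*k - n)) * norm y ^ (2*k - n)"
  proof -
    have "(16::real)^n = 4^n * 4^n"
      by (simp flip: power_mult_distrib)
    then show ?thesis
      by (simp add: power_mult_distrib mult_ac)
  qed
  finally show ?thesis
    using True by simp
qed

lemma sum_choose_shifted_le:
  fixes b :: real
  assumes "0 \<le> b"
  shows "(\<Sum>k\<le>n. if n \<le> 2*k then (n choose (2*k - n)) * b ^ (2*k - n) else 0) \<le> (1 + b)^n"
proof -
  define S where "S = {k \<in> {..n}. n \<le> 2*k}"
  define g where "g j = real (n choose j) * b ^ j" for j
  have "(\<Sum>k\<le>n. if n \<le> 2*k then (n choose (2*k - n)) * b ^ (2*k - n) else 0)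
      = (\<Sum>k\<in>S. g (2*k - n))"
    unfolding S_def g_def by (simp add: sum.inter_filter[symmetric])
  also have "\<dots> = sum g ((\<lambda>k. 2*k - n) ` S)"
    by (rule sum.reindex[symmetric, unfolded comp_def]) (auto simp: inj_on_def S_def)
  also have "\<dots> \<le> sum g {..n}"
    by (rule sum_mono2) (auto simp: S_def g_def assms)
  also have "\<dots> = (b + 1)^n"
    by (simp add: g_def binomial_ring)
  finally show ?thesis
    by (simp add: add.commute)
qed

lemma summable_on_triangle_if_row_sums_le:
  fixes f :: "nat \<times> nat \<Rightarrow> real"
  assumes nonneg: "\<And>n k. k \<le> n \<Longrightarrow> 0 \<le> f (n, k)"
    and rows: "\<And>n. (\<Sum>k\<le>n. f (n, k)) \<le> c n"
    and "summable c"
  shows "f summable_on {(n, k). k \<le> n}"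
proof -
  have row_nonneg: "0 \<le> (\<Sum>k\<le>n. f (n, k))" for n
    by (intro sum_nonneg nonneg) simp
  then have "norm (\<Sum>k\<le>n. f (n, k)) \<le> c n" for n
    using rows[of n] by simp
  then have "summable (\<lambda>n. \<Sum>k\<le>n. f (n, k))"
    by (rule summable_comparison_test'[OF \<open>summable c\<close>])
  then have "(\<lambda>n. \<Sum>k\<le>n. f (n, k)) summable_on UNIV"
    by (simp add: summable_on_UNIV_nonneg_real_iff[OF row_nonneg])
  then have "f summable_on (SIGMA n:UNIV. {..n})"
    by (intro summable_on_SigmaI[where g = "\<lambda>n. \<Sum>k\<le>n. f (n, k)"] has_sum_finite)
      (auto intro: nonneg)
  moreover have "(SIGMA n:UNIV. {..n}) = {(n, k). k \<le> n}"
    by auto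
  ultimately show ?thesis
    by metis
qed

lemma sq_lt_one_imp_four_sq_mult_lt_one:
  fixes u v :: real
  assumes "0 \<le> u" "0 \<le> v" "(2 * u * (u + v))^2 < 1"
  shows "4*u^2*(1 + v^2 - u^2) < 1"
proof -
  define w where "w = 2 * u * (u + v)"
  have "0 \<le> w" "w < 1"
    using assms by (auto simp: w_def abs_square_less_1)
  have "4*u^2 \<le> 2*w"
    using assms by (simp add: w_def power2_eq_square algebra_simps)
  then have "4*u^2*(1 - w) \<le> 2*w*(1 - w)"
    using \<open>w < 1\<close> by (intro mult_right_mono) auto
  moreover have "4*u^2*(1 + v^2 - u^2) = w^2 + 4*u^2*(1 - w)"
    by (simp add: w_def power2_eq_square algebra_simps)
  moreover have "w^2 + 2*w*(1 - w) = 1 - (1 - w)^2"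
    by (simp add: power2_eq_square algebra_simps)
  moreover have "0 < (1 - w)^2"
    using \<open>w < 1\<close> by simp
  ultimately show ?thesis
    by linarith
qed

lemma convergence_condition_imp_ratio_lt_one:
  fixes a b :: real
  assumes "0 \<le> a" "0 < b" "16*a*b*(sqrt (4*a/b) + sqrt (1 + 4*a/b))^2 < 1"
  shows "16*a*(1 + b) < 1"
proof -
  define u where "u = sqrt (4*a)"
  define v where "v = sqrt (4*a + b)"
  have "sqrt b * (sqrt (4*a/b) + sqrt (1 + 4*a/b)) = u + v"
    using assms by (simp add: u_def v_def distrib_left flip: real_sqrt_mult add: field_simps)
  then have uv: "b*(sqrt (4*a/b) + sqrt (1 + 4*a/b))^2 = (u + v)^2"
    using assms by (metis power_mult_distrib real_sqrt_pow2 less_imp_le)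
  have u2: "u^2 = 4*a" and v2: "v^2 = 4*a + b"
    using assms by (simp_all add: u_def v_def)
  have "(2 * u * (u + v))^2 = 4 * u^2 * (u + v)^2"
    by (simp add: power_mult_distrib)
  also have "\<dots> = 16*a*b*(sqrt (4*a/b) + sqrt (1 + 4*a/b))^2"
    by (simp add: u2 flip: uv)
  finally have "(2 * u * (u + v))^2 < 1"
    using assms(3) by simp
  moreover have "16*a*(1 + b) = 4*u^2*(1 + v^2 - u^2)"
    by (simp add: u2 v2 algebra_simps)
  moreover have "0 \<le> u" "0 \<le> v"
    using assms by (simp_all add: u_def v_def)
  ultimately show ?thesis
    using sq_lt_one_imp_four_sq_mult_lt_one[of u v] by simp
qed

theorem proposition2p2:
  fixes x y :: complex
  assumes "y \<noteq> 0"
    and "norm (16 * x * y * (complex_of_real (sqrt (norm (4 * x / y)))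
                 + complex_of_real (sqrt (1 + norm (4 * x / y)))) ^ 2) < 1"
  shows "(\<lambda>(n, k). norm (A_term x y n k)) summable_on {(n, k). k \<le> n}"
proof -
  let ?a = "norm x" and ?b = "norm y"
  define r where "r = 16 * ?a * (1 + ?b)"
  define h where "h = (\<lambda>(n, k). (16 * ?a)^n
    * (if n \<le> 2*k then (n choose (2*k - n)) * ?b ^ (2*k - n) else 0))"
  have "16 * ?a * ?b * (sqrt (4 * ?a / ?b) + sqrt (1 + 4 * ?a / ?b))^2 < 1"
    using assms(2) by (simp add: norm_mult norm_power norm_divide flip: of_real_add)
  then have "r < 1"
    using assms(1) by (simp add: r_def convergence_condition_imp_ratio_lt_one)
  then have "summable (\<lambda>n. r^n)"
    by (simp add: r_def)
  have h_summable: "h summable_on {(n, k). k \<le> n}"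
  proof (rule summable_on_triangle_if_row_sums_le[OF _ _ \<open>summable (\<lambda>n. r^n)\<close>])
    show "(\<Sum>k\<le>n. h (n, k)) \<le> r^n" for n
      using mult_left_mono[OF sum_choose_shifted_le[of ?b n], of "(16 * ?a)^n"]
      by (simp add: h_def r_def sum_distrib_left power_mult_distrib mult.assoc)
  qed (simp add: h_def)
  have "norm (A_term x y n k) \<le> h (n, k)" for n k
    unfolding h_def prod.case by (rule norm_A_term_le)
  then show ?thesis
    by (intro summable_on_comparison_test[OF h_summable]) auto
qed

end
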